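(* Let $\Omega\subset\mathbb{R}^N$ be a bounded open connected set, $F:\Omega\times\mathbb{R}\times\mathcal{S}(N)\to\mathbb{R}$ continuous with $\{(r,A):F(x,r,A)=0\}\neq\emptyset$ for each $x$, and $\Phi$ a proper elliptic map on $\Omega$ such that $F(x,r+s,A+P)\ge F(x,r,A)$ for all $x\in\Omega$, $(r,A)\in\Phi(x)$, $(s,P)\in\mathcal{Q}$. Let $\Theta(x):=\{(r,A)\in\Phi(x):F(x,r,A)\ge0\}$ and suppose $\Theta$ is a proper elliptic map. Then: (a) $u\in\mathrm{USC}(\Omega)$ is a $\Phi$-admissible viscosity subsolution of $F(x,u,D^2u)=0$ in $\Omega$ if and only if $u$ is $\Theta$-subharmonic in $\Omega$. (b) Provided that $F(x,r,A)>0$ for each $x\in\Omega$ and each $(r,A)\in(\Theta(x))^\circ$, a function $u\in\mathrm{LSC}(\Omega)$ is a $\Phi$-admissible viscosity supersolution of $F(x,u,D^2u)=0$ in $\Omega$ if and only if $u$ is $\Theta$-superharmonic in $\Omega$ (equivalently, $-u$ is $\tilde\Theta$-subharmonic in $\Omega$).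
   Context: $\mathcal{S}(N)$: real symmetric $N\times N$ matrices. $\mathcal{Q}:=\{(s,P): s\le0,\ P\ge0\}$. A proper elliptic map assigns to each $x\in\Omega$ a closed, nonempty set $\subsetneq\mathbb{R}\times\mathcal{S}(N)$ invariant under adding $\mathcal Q$. Dual map: $\tilde\Theta(x):=-\big[(\mathbb{R}\times\mathcal{S}(N))\setminus(\Theta(x))^\circ\big]$. $J^+_{x_0}u:=\{(\varphi(x_0),D^2\varphi(x_0)):\varphi$ is $C^2$ near $x_0$, $u\le\varphi$ near $x_0$, $u(x_0)=\varphi(x_0)\}$, $J^-_{x_0}u$ likewise with $u\ge\varphi$. $u\in\mathrm{USC}(\Omega)$ is $\Theta$-subharmonic if $J^+_{x_0}u\subset\Theta(x_0)$ for all $x_0$; $u\in\mathrm{LSC}(\Omega)$ is $\Theta$-superharmonic if $J^-_{x_0}u\subset(\mathbb{R}\times\mathcal{S}(N))\setminus(\Theta(x_0))^\circ$ for all $x_0$. $u\in\mathrm{USC}(\Omega)$ is a $\Phi$-admissible viscosity subsolution if for every $x_0\in\Omega$ and $(r,A)\in J^+_{x_0}u$: $F(x_0,r,A)\ge0$ and $(r,A)\in\Phi(x_0)$. $u\in\mathrm{LSC}(\Omega)$ is a $\Phi$-admissible viscosity supersolution if for every $x_0$ and $(r,A)\in J^-_{x_0}u$: $F(x_0,r,A)\le0$ or $(r,A)\notin(\Phi(x_0))^\circ$. *)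

theory Defs
  imports "HOL-Analysis.Analysis"
begin

definition sym_mat :: "real^'n^'n \<Rightarrow> bool" where
  "sym_mat A \<longleftrightarrow> transpose A = A"

definition Smat :: "(real^'n^'n) set" where
  "Smat = {A. sym_mat A}"

definition RS :: "(real \<times> (real^'n^'n)) set" where
  "RS = UNIV \<times> Smat"

definition RS_top :: "(real \<times> (real^'n^'n)) topology" where
  "RS_top = top_of_set RS"

definition RS_interior :: "(real \<times> (real^'n^'n)) set \<Rightarrow> (real \<times> (real^'n^'n)) set" where
  "RS_interior S = RS_top interior_of S"

definition psd :: "real^'n^'n \<Rightarrow> bool" where
  "psd P \<longleftrightarrow> (\<forall>v. v \<bullet> (P *v v) \<ge> 0)"

definition Qcone :: "(real \<times> (real^'n^'n)) set" where
  "Qcone = {(s, P). s \<le> 0 \<and> sym_mat P \<and> psd P}"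

definition proper_elliptic_map ::
  "(real^'n) set \<Rightarrow> (real^'n \<Rightarrow> (real \<times> (real^'n^'n)) set) \<Rightarrow> bool" where
  "proper_elliptic_map \<Omega> \<Theta> \<longleftrightarrow>
     (\<forall>x\<in>\<Omega>. \<Theta> x \<subseteq> RS \<and> closedin RS_top (\<Theta> x) \<and> \<Theta> x \<noteq> {} \<and> \<Theta> x \<noteq> RS \<and>
        (\<forall>(r, A)\<in>\<Theta> x. \<forall>(s, P)\<in>Qcone. (r + s, A + P) \<in> \<Theta> x))"

definition dual_map ::
  "(real^'n \<Rightarrow> (real \<times> (real^'n^'n)) set) \<Rightarrow> real^'n \<Rightarrow> (real \<times> (real^'n^'n)) set" where
  "dual_map \<Theta> x = (\<lambda>(r, A). (- r, - A)) ` (RS - RS_interior (\<Theta> x))"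

definition C2_near :: "(real^'n \<Rightarrow> real) \<Rightarrow> real^'n \<Rightarrow> (real^'n \<Rightarrow> real^'n^'n) \<Rightarrow> bool" where
  "C2_near \<phi> x0 H \<longleftrightarrow>
     (\<exists>e>0. \<exists>D :: real^'n \<Rightarrow> real^'n.
        (\<forall>y\<in>ball x0 e. (\<phi> has_derivative (\<lambda>h. D y \<bullet> h)) (at y)) \<and>
        (\<forall>y\<in>ball x0 e. (D has_derivative (\<lambda>h. H y *v h)) (at y)) \<and>
        continuous_on (ball x0 e) H \<and>
        (\<forall>y\<in>ball x0 e. sym_mat (H y)))"

definition upper_jet :: "(real^'n \<Rightarrow> real) \<Rightarrow> real^'n \<Rightarrow> (real \<times> (real^'n^'n)) set" where
  "upper_jet u x0 = {(\<phi> x0, H x0) | \<phi> H. C2_near \<phi> x0 H \<and>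
       (\<forall>\<^sub>F y in at x0. u y \<le> \<phi> y) \<and> u x0 = \<phi> x0}"

definition lower_jet :: "(real^'n \<Rightarrow> real) \<Rightarrow> real^'n \<Rightarrow> (real \<times> (real^'n^'n)) set" where
  "lower_jet u x0 = {(\<phi> x0, H x0) | \<phi> H. C2_near \<phi> x0 H \<and>
       (\<forall>\<^sub>F y in at x0. u y \<ge> \<phi> y) \<and> u x0 = \<phi> x0}"

definition usc_on :: "(real^'n) set \<Rightarrow> (real^'n \<Rightarrow> real) \<Rightarrow> bool" where
  "usc_on \<Omega> u \<longleftrightarrow> (\<forall>x\<in>\<Omega>. \<forall>t. u x < t \<longrightarrow> (\<forall>\<^sub>F y in at x within \<Omega>. u y < t))"

definition lsc_on :: "(real^'n) set \<Rightarrow> (real^'n \<Rightarrow> real) \<Rightarrow> bool" where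
  "lsc_on \<Omega> u \<longleftrightarrow> (\<forall>x\<in>\<Omega>. \<forall>t. t < u x \<longrightarrow> (\<forall>\<^sub>F y in at x within \<Omega>. t < u y))"

definition subharmonic ::
  "(real^'n) set \<Rightarrow> (real^'n \<Rightarrow> (real \<times> (real^'n^'n)) set) \<Rightarrow> (real^'n \<Rightarrow> real) \<Rightarrow> bool" where
  "subharmonic \<Omega> \<Theta> u \<longleftrightarrow> usc_on \<Omega> u \<and> (\<forall>x0\<in>\<Omega>. upper_jet u x0 \<subseteq> \<Theta> x0)"

definition superharmonic ::
  "(real^'n) set \<Rightarrow> (real^'n \<Rightarrow> (real \<times> (real^'n^'n)) set) \<Rightarrow> (real^'n \<Rightarrow> real) \<Rightarrow> bool" where
  "superharmonic \<Omega> \<Theta> u \<longleftrightarrow> lsc_on \<Omega> u \<and>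
     (\<forall>x0\<in>\<Omega>. lower_jet u x0 \<subseteq> RS - RS_interior (\<Theta> x0))"

definition admissible_subsolution ::
  "(real^'n) set \<Rightarrow> (real^'n \<Rightarrow> real \<Rightarrow> real^'n^'n \<Rightarrow> real) \<Rightarrow>
   (real^'n \<Rightarrow> (real \<times> (real^'n^'n)) set) \<Rightarrow> (real^'n \<Rightarrow> real) \<Rightarrow> bool" where
  "admissible_subsolution \<Omega> F \<Phi> u \<longleftrightarrow> usc_on \<Omega> u \<and>
     (\<forall>x0\<in>\<Omega>. \<forall>(r, A)\<in>upper_jet u x0. F x0 r A \<ge> 0 \<and> (r, A) \<in> \<Phi> x0)"

definition admissible_supersolution ::
  "(real^'n) set \<Rightarrow> (real^'n \<Rightarrow> real \<Rightarrow> real^'n^'n \<Rightarrow> real) \<Rightarrow>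
   (real^'n \<Rightarrow> (real \<times> (real^'n^'n)) set) \<Rightarrow> (real^'n \<Rightarrow> real) \<Rightarrow> bool" where
  "admissible_supersolution \<Omega> F \<Phi> u \<longleftrightarrow> lsc_on \<Omega> u \<and>
     (\<forall>x0\<in>\<Omega>. \<forall>(r, A)\<in>lower_jet u x0. F x0 r A \<le> 0 \<or> (r, A) \<notin> RS_interior (\<Phi> x0))"

end

theory Submission
  imports Defs
begin

(* Both equivalences are pointwise statements about jets.  For subsolutions, Theta(x) is by
   definition the set of admissible jets at which F is nonnegative.  For supersolutions, the
   point is that the interior of Theta(x) is the interior of Phi(x) intersected with {F > 0}:
   that intersection is relatively open by continuity of F and lies in Theta(x), while
   conversely F > 0 on the interior of Theta(x) by hypothesis.  The dual formulation is the
   jet identity J^+(-u) = -J^-(u). *)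

lemma sym_mat_uminus: "sym_mat A \<Longrightarrow> sym_mat (- A)"
  unfolding sym_mat_def by (simp add: transpose_def vec_eq_iff)

lemma matrix_vector_mult_uminus_left: "(- M) *v v = - (M *v v)"
  for M :: "real^'n^'m"
  by (simp add: matrix_vector_mult_def vec_eq_iff sum_negf)

lemma C2_near_uminus:
  assumes "C2_near \<phi> x0 H"
  shows "C2_near (\<lambda>y. - \<phi> y) x0 (\<lambda>y. - H y)"
proof -
  obtain e D where "e > 0"
    and D: "\<forall>y\<in>ball x0 e. (\<phi> has_derivative (\<lambda>h. D y \<bullet> h)) (at y)"
    and H: "\<forall>y\<in>ball x0 e. (D has_derivative (\<lambda>h. H y *v h)) (at y)"
    and H_cont: "continuous_on (ball x0 e) H" and H_sym: "\<forall>y\<in>ball x0 e. sym_mat (H y)"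
    using assms unfolding C2_near_def by blast
  have "\<forall>y\<in>ball x0 e. ((\<lambda>y. - \<phi> y) has_derivative (\<lambda>h. (- D y) \<bullet> h)) (at y)"
    using D by (auto intro: has_derivative_minus[THEN has_derivative_eq_rhs])
  moreover have "\<forall>y\<in>ball x0 e. ((\<lambda>y. - D y) has_derivative (\<lambda>h. (- H y) *v h)) (at y)"
    using H by (auto intro!: has_derivative_minus[THEN has_derivative_eq_rhs]
        simp: matrix_vector_mult_uminus_left)
  moreover have "continuous_on (ball x0 e) (\<lambda>y. - H y)"
    using H_cont by (intro continuous_intros)
  moreover have "\<forall>y\<in>ball x0 e. sym_mat (- H y)"
    using H_sym sym_mat_uminus by blast
  ultimately show ?thesis
    unfolding C2_near_def using \<open>e > 0\<close> by (intro exI[of _ e] exI[of _ "\<lambda>y. - D y"] conjI) blast+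
qed

lemma upper_jet_uminus:
  "upper_jet (\<lambda>x. - u x) x0 = (\<lambda>(r, A). (- r, - A)) ` lower_jet u x0"
proof (intro equalityI subsetI)
  fix p assume "p \<in> upper_jet (\<lambda>x. - u x) x0"
  then obtain \<phi> H where p: "p = (\<phi> x0, H x0)" and "C2_near \<phi> x0 H"
    and ev: "\<forall>\<^sub>F y in at x0. - u y \<le> \<phi> y" and "- u x0 = \<phi> x0"
    unfolding upper_jet_def by blast
  moreover have "\<forall>\<^sub>F y in at x0. - \<phi> y \<le> u y"
    using ev by (rule eventually_mono) simp
  ultimately have "(- \<phi> x0, - H x0) \<in> lower_jet u x0"
    unfolding lower_jet_def by (auto intro!: exI[of _ "\<lambda>y. - \<phi> y"] C2_near_uminus)
  then show "p \<in> (\<lambda>(r, A). (- r, - A)) ` lower_jet u x0"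
    by (auto simp: p intro!: image_eqI[where x="(- \<phi> x0, - H x0)"])
next
  fix p assume "p \<in> (\<lambda>(r, A). (- r, - A)) ` lower_jet u x0"
  then obtain \<phi> H where p: "p = (- \<phi> x0, - H x0)" and "C2_near \<phi> x0 H"
    and ev: "\<forall>\<^sub>F y in at x0. \<phi> y \<le> u y" and "u x0 = \<phi> x0"
    unfolding lower_jet_def by fastforce
  moreover have "\<forall>\<^sub>F y in at x0. - u y \<le> - \<phi> y"
    using ev by (rule eventually_mono) simp
  ultimately show "p \<in> upper_jet (\<lambda>x. - u x) x0"
    unfolding upper_jet_def by (auto intro!: exI[of _ "\<lambda>y. - \<phi> y"] C2_near_uminus)
qed

lemma lower_jet_subset_RS: "lower_jet u x0 \<subseteq> RS"
  unfolding lower_jet_def RS_def Smat_def C2_near_def by auto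

lemma usc_on_uminus_iff: "usc_on \<Omega> (\<lambda>x. - u x) \<longleftrightarrow> lsc_on \<Omega> u"
  unfolding usc_on_def lsc_on_def
proof (intro iffI ballI allI impI)
  fix x t assume usc: "\<forall>x\<in>\<Omega>. \<forall>t. - u x < t \<longrightarrow> (\<forall>\<^sub>F y in at x within \<Omega>. - u y < t)"
    and "x \<in> \<Omega>" and "t < u x"
  then have "\<forall>\<^sub>F y in at x within \<Omega>. - u y < - t"
    using usc[rule_format, of x "- t"] by simp
  then show "\<forall>\<^sub>F y in at x within \<Omega>. t < u y" by (rule eventually_mono) simp
next
  fix x t assume lsc: "\<forall>x\<in>\<Omega>. \<forall>t. t < u x \<longrightarrow> (\<forall>\<^sub>F y in at x within \<Omega>. t < u y)"
    and "x \<in> \<Omega>" and "- u x < t"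
  then have "\<forall>\<^sub>F y in at x within \<Omega>. - t < u y"
    using lsc[rule_format, of x "- t"] by simp
  then show "\<forall>\<^sub>F y in at x within \<Omega>. - u y < t" by (rule eventually_mono) simp
qed

lemma superharmonic_iff_subharmonic_dual:
  "superharmonic \<Omega> \<Theta> u \<longleftrightarrow> subharmonic \<Omega> (dual_map \<Theta>) (\<lambda>x. - u x)"
proof -
  have "inj (\<lambda>(r::real, A::real^'n^'n). (- r, - A))"
    by (auto simp: inj_def)
  then have "upper_jet (\<lambda>x. - u x) x0 \<subseteq> dual_map \<Theta> x0
      \<longleftrightarrow> lower_jet u x0 \<subseteq> RS - RS_interior (\<Theta> x0)" for x0
    unfolding upper_jet_uminus dual_map_def by (rule inj_image_subset_iff)
  then show ?thesis
    unfolding superharmonic_def subharmonic_def usc_on_uminus_iff by simp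
qed

lemma admissible_subsolution_iff_subharmonic:
  assumes "\<forall>x\<in>\<Omega>. \<Theta> x = {(r, A). (r, A) \<in> \<Phi> x \<and> F x r A \<ge> 0}"
  shows "admissible_subsolution \<Omega> F \<Phi> u \<longleftrightarrow> subharmonic \<Omega> \<Theta> u"
  unfolding admissible_subsolution_def subharmonic_def using assms by fastforce

lemma interior_of_superlevel_subset:
  fixes f :: "'a::topological_space \<Rightarrow> real"
  assumes "continuous_on S f"
  shows "top_of_set S interior_of \<Phi> \<inter> {p. f p > 0}
      \<subseteq> top_of_set S interior_of {p \<in> \<Phi>. f p \<ge> 0}"
proof -
  have "openin (top_of_set S) (S \<inter> {p. f p > 0})"
    using continuous_openin_preimage_gen[OF assms open_greaterThan, of 0] by (simp add: vimage_def)
  then have "S \<inter> {p. f p > 0} \<subseteq> top_of_set S interior_of {p. f p \<ge> 0}"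
    by (intro interior_of_maximal) auto
  moreover have "top_of_set S interior_of \<Phi> \<subseteq> S"
    using interior_of_subset_topspace by fastforce
  moreover have "{p \<in> \<Phi>. f p \<ge> 0} = \<Phi> \<inter> {p. f p \<ge> 0}"
    by blast
  ultimately show ?thesis
    by (auto simp: interior_of_Int)
qed

lemma RS_interior_superlevel:
  fixes f :: "real \<times> (real^'n^'n) \<Rightarrow> real"
  assumes "continuous_on RS f"
    and \<Theta>_eq: "\<Theta> = {p \<in> \<Phi>. f p \<ge> 0}"
    and pos: "\<forall>p\<in>RS_interior \<Theta>. f p > 0"
  shows "RS_interior \<Theta> = RS_interior \<Phi> \<inter> {p. f p > 0}"
proof
  show "RS_interior \<Phi> \<inter> {p. f p > 0} \<subseteq> RS_interior \<Theta>"
    using interior_of_superlevel_subset[OF assms(1)]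
    unfolding \<Theta>_eq RS_interior_def RS_top_def .
  have "RS_interior \<Theta> \<subseteq> RS_interior \<Phi>"
    unfolding RS_interior_def \<Theta>_eq by (rule interior_of_mono) blast
  then show "RS_interior \<Theta> \<subseteq> RS_interior \<Phi> \<inter> {p. f p > 0}"
    using pos by blast
qed

lemma continuous_on_RS_slice:
  assumes "continuous_on (\<Omega> \<times> UNIV \<times> Smat) (\<lambda>(x, r, A). F x r A)" and "x \<in> \<Omega>"
  shows "continuous_on RS (\<lambda>(r, A). F x r A)"
proof -
  have "continuous_on RS ((\<lambda>(x, r, A). F x r A) \<circ> (\<lambda>p. (x, p)))"
    by (intro continuous_on_compose continuous_intros continuous_on_subset[OF assms(1)])
      (use assms(2) in \<open>auto simp: RS_def\<close>)
  then show ?thesis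
    by (simp add: o_def case_prod_beta)
qed

lemma admissible_supersolution_iff_superharmonic:
  assumes F_cont: "continuous_on (\<Omega> \<times> UNIV \<times> Smat) (\<lambda>(x, r, A). F x r A)"
    and \<Theta>_def: "\<forall>x\<in>\<Omega>. \<Theta> x = {(r, A). (r, A) \<in> \<Phi> x \<and> F x r A \<ge> 0}"
    and pos: "\<forall>x\<in>\<Omega>. \<forall>(r, A)\<in>RS_interior (\<Theta> x). F x r A > 0"
  shows "admissible_supersolution \<Omega> F \<Phi> u \<longleftrightarrow> superharmonic \<Omega> \<Theta> u"
proof -
  have "RS_interior (\<Theta> x) = RS_interior (\<Phi> x) \<inter> {p. (\<lambda>(r, A). F x r A) p > 0}"
    if "x \<in> \<Omega>" for x
  proof (rule RS_interior_superlevel[OF continuous_on_RS_slice[OF F_cont that]])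
    show "\<Theta> x = {p \<in> \<Phi> x. (\<lambda>(r, A). F x r A) p \<ge> 0}"
      using \<Theta>_def that by auto
    show "\<forall>p\<in>RS_interior (\<Theta> x). (\<lambda>(r, A). F x r A) p > 0"
      using pos that by auto
  qed
  then have "(\<forall>(r, A)\<in>lower_jet u x. F x r A \<le> 0 \<or> (r, A) \<notin> RS_interior (\<Phi> x))
      \<longleftrightarrow> lower_jet u x \<subseteq> RS - RS_interior (\<Theta> x)" if "x \<in> \<Omega>" for x
    using that lower_jet_subset_RS[of u x] by auto
  then show ?thesis
    unfolding admissible_supersolution_def superharmonic_def by simp
qed

theorem theorem6p5:
  fixes \<Omega> :: "(real^'n) set"
    and F :: "real^'n \<Rightarrow> real \<Rightarrow> real^'n^'n \<Rightarrow> real"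
    and \<Phi> \<Theta> :: "real^'n \<Rightarrow> (real \<times> (real^'n^'n)) set"
  assumes bounded: "bounded \<Omega>" and open_\<Omega>: "open \<Omega>" and conn: "connected \<Omega>"
    and F_cont: "continuous_on (\<Omega> \<times> UNIV \<times> Smat) (\<lambda>(x, r, A). F x r A)"
    and F_zero: "\<forall>x\<in>\<Omega>. \<exists>r. \<exists>A\<in>Smat. F x r A = 0"
    and \<Phi>_ell: "proper_elliptic_map \<Omega> \<Phi>"
    and F_mono: "\<forall>x\<in>\<Omega>. \<forall>(r, A)\<in>\<Phi> x. \<forall>(s, P)\<in>Qcone. F x (r + s) (A + P) \<ge> F x r A"
    and \<Theta>_def: "\<forall>x\<in>\<Omega>. \<Theta> x = {(r, A). (r, A) \<in> \<Phi> x \<and> F x r A \<ge> 0}"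
    and \<Theta>_ell: "proper_elliptic_map \<Omega> \<Theta>"
  shows "(\<forall>u. usc_on \<Omega> u \<longrightarrow> (admissible_subsolution \<Omega> F \<Phi> u \<longleftrightarrow> subharmonic \<Omega> \<Theta> u))
       \<and> ((\<forall>x\<in>\<Omega>. \<forall>(r, A)\<in>RS_interior (\<Theta> x). F x r A > 0) \<longrightarrow>
          (\<forall>u. lsc_on \<Omega> u \<longrightarrow>
             (admissible_supersolution \<Omega> F \<Phi> u \<longleftrightarrow> superharmonic \<Omega> \<Theta> u)
             \<and> (superharmonic \<Omega> \<Theta> u \<longleftrightarrow> subharmonic \<Omega> (dual_map \<Theta>) (\<lambda>x. - u x))))"
  using admissible_subsolution_iff_subharmonic[OF \<Theta>_def]
    admissible_supersolution_iff_superharmonic[OF F_cont \<Theta>_def]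
    superharmonic_iff_subharmonic_dual
  by blast

end
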